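(* Consider a two-user multiple-access network (users $A$ and $B$) with saturated traffic running slotted Aloha. Time is divided into slots of duration $T_\text{slot}$, equal to the common packet duration. In each slot, user $A$ transmits with probability $p_A$ and user $B$ with probability $p_B$, independently of each other and across slots. A slot is a successful channel access by a user exactly when that user is the only one transmitting. Then the channel cycle time of slotted Aloha is $$\Psi_\text{slotted-Aloha} = \frac{(1-p_A)p_B+(1-p_B)p_A}{(1-p_A)(1-p_B)p_Ap_B}\cdot T_\text{slot}.$$
   Context: Consider a multiple-access network with $N$ users sharing a channel. For times $t<t'$, let $M_n(t,t')$ denote the number of successful channel accesses of user $n$ between $t$ and $t'$. A moment is a refresh moment of user $i$ if and only if two conditions hold: a successful channel access of user $i$ ends at this moment, and the next successful channel access belongs to another user. The cycle time $\Gamma_i$ of user $i$ is the random variable defined as follows. Take two refresh moments $t_0<t_1$ of user $i$. - If they are consecutive refresh moments of user $i$, then $t_1-t_0$ is a cycle time of user $i$ iff $\min_n M_n(t_0,t_1)>0$. - If they are not consecutive, then $t_1-t_0$ is a cycle time iff $\min_n M_n(t_0,t_1)>0$ and $\min_n M_n(t_0,t')=0$, where $t'$ (with $t_0<t'<t_1$) is the refresh moment of user $i$ closest to $t_1$. In words, a cycle time is the duration between two closest refresh moments of user $i$ during which every other user has successfully accessed the channel at least once. The channel cycle time is $\Psi = \frac1N\sum_{n=1}^N \mathbb{E}[\Gamma_n]$. Here $N=2$. *)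

theory Defs
  imports "HOL-Probability.Probability"
begin

datatype user = UA | UB

definition slot_pmf :: "real \<Rightarrow> real \<Rightarrow> (bool \<times> bool) pmf" where
  "slot_pmf pA pB = pair_pmf (bernoulli_pmf pA) (bernoulli_pmf pB)"

definition aloha_space :: "real \<Rightarrow> real \<Rightarrow> (bool \<times> bool) stream measure" where
  "aloha_space pA pB = stream_space (measure_pmf (slot_pmf pA pB))"

definition tx :: "(bool \<times> bool) stream \<Rightarrow> user \<Rightarrow> nat \<Rightarrow> bool" where
  "tx \<omega> u n = (case u of UA \<Rightarrow> fst (\<omega> !! n) | UB \<Rightarrow> snd (\<omega> !! n))"

definition succ :: "(bool \<times> bool) stream \<Rightarrow> user \<Rightarrow> nat \<Rightarrow> bool" where
  "succ \<omega> u n \<longleftrightarrow> tx \<omega> u n \<and> (\<forall>v. v \<noteq> u \<longrightarrow> \<not> tx \<omega> v n)"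

text \<open>Moments are ends of slots: index k stands for the moment (k+1) * T_slot.
  M_n(t_k, t_k') = number of successful accesses of v in slots k+1 .. k'.\<close>
definition M :: "(bool \<times> bool) stream \<Rightarrow> user \<Rightarrow> nat \<Rightarrow> nat \<Rightarrow> nat" where
  "M \<omega> v k k' = card {j. k < j \<and> j \<le> k' \<and> succ \<omega> v j}"

definition refresh :: "(bool \<times> bool) stream \<Rightarrow> user \<Rightarrow> nat \<Rightarrow> bool" where
  "refresh \<omega> u k \<longleftrightarrow> succ \<omega> u k \<and>
     (\<exists>m>k. (\<exists>v. succ \<omega> v m) \<and> (\<forall>j. k < j \<and> j < m \<longrightarrow> \<not> (\<exists>v. succ \<omega> v j)) \<and> \<not> succ \<omega> u m)"

definition is_cycle :: "(bool \<times> bool) stream \<Rightarrow> user \<Rightarrow> nat \<Rightarrow> nat \<Rightarrow> bool" where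
  "is_cycle \<omega> u k0 k1 \<longleftrightarrow> refresh \<omega> u k0 \<and> refresh \<omega> u k1 \<and> k0 < k1 \<and>
     ( ((\<forall>k'. k0 < k' \<and> k' < k1 \<longrightarrow> \<not> refresh \<omega> u k') \<and> (\<forall>v. M \<omega> v k0 k1 > 0))
     \<or> (\<exists>k'. k0 < k' \<and> k' < k1 \<and> refresh \<omega> u k' \<and>
           (\<forall>k''. k' < k'' \<and> k'' < k1 \<longrightarrow> \<not> refresh \<omega> u k'') \<and>
           (\<forall>v. M \<omega> v k0 k1 > 0) \<and> (\<exists>v. M \<omega> v k0 k' = 0)))"

text \<open>Cycle time random variable of u: the cycle starting at the first refresh moment of u
  (cycles are i.i.d. here, so this is the typical cycle), in units of T_slot.\<close>
definition first_refresh :: "(bool \<times> bool) stream \<Rightarrow> user \<Rightarrow> nat" where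
  "first_refresh \<omega> u = (LEAST k. refresh \<omega> u k)"

definition cycle_time :: "real \<Rightarrow> (bool \<times> bool) stream \<Rightarrow> user \<Rightarrow> real" where
  "cycle_time T \<omega> u =
     T * real ((LEAST k1. is_cycle \<omega> u (first_refresh \<omega> u) k1) - first_refresh \<omega> u)"

definition channel_cycle_time :: "real \<Rightarrow> real \<Rightarrow> real \<Rightarrow> real" where
  "channel_cycle_time pA pB T =
     (\<Sum>u\<in>(UNIV :: user set). \<integral>\<omega>. cycle_time T \<omega> u \<partial>aloha_space pA pB)
       / real (card (UNIV :: user set))"

end

theory Submission
  imports Defs
begin

(*
  Let h be the first success of the other user after the first success
  of u. The first refresh moment f of u is the last success of u before h, no refresh moment of u
  lies in (f, h], and so the cycle starting at f ends at the first refresh moment after h, namely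
  at h + 1 + f', where f' is the first refresh moment of the slot sequence shifted by h + 1. With
  two users every user succeeds between consecutive refresh moments, so the paper's cycle
  condition holds automatically.

  Since h + 1 is a stopping time, the strong Markov property of the i.i.d. slot sequence makes f'
  distributed like f, whence E[cycle] = E[h + 1 - f] + E[f] = E[h + 1], with no finiteness of E[f]
  needed. Moreover h + 1 is the sum of two geometric waiting times: for a success of u, with
  parameter pA(1 - pB) (for u = A), and then for a success of the other user, with parameter
  pB(1 - pA).
*)

lemma Least_gt_eq_add_Least:
  fixes R :: "nat \<Rightarrow> bool"
  assumes "f < H" and "\<And>k. f < k \<Longrightarrow> k < H \<Longrightarrow> \<not> R k" and "R r" "H \<le> r"
  shows "(LEAST k. f < k \<and> R k) = H + (LEAST k. R (H + k))"
proof (rule Least_equality)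
  have "R (H + (r - H))"
    using assms(3,4) by simp
  then have "R (H + (LEAST k. R (H + k)))"
    by (rule LeastI[of "\<lambda>k. R (H + k)"])
  with assms(1) show "f < H + (LEAST k. R (H + k)) \<and> R (H + (LEAST k. R (H + k)))"
    by simp
  fix y
  assume y: "f < y \<and> R y"
  with assms(2) have "H \<le> y"
    by (meson not_le)
  with y have "(LEAST k. R (H + k)) \<le> y - H"
    by (intro Least_le) simp
  with \<open>H \<le> y\<close> show "H + (LEAST k. R (H + k)) \<le> y"
    by simp
qed

lemma ex_gt_shift: "(\<exists>m>k. P (n + m)) \<longleftrightarrow> (\<exists>m>n + k. P (m::nat))"
proof
  assume "\<exists>m>k. P (n + m)"
  then obtain m where "k < m" "P (n + m)"
    by blast
  then show "\<exists>m>n + k. P m"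
    by (intro exI[of _ "n + m"]) simp
next
  assume "\<exists>m>n + k. P m"
  then obtain m where "n + k < m" "P m"
    by blast
  then show "\<exists>m>k. P (n + m)"
    by (intro exI[of _ "m - n"]) auto
qed

lemma all_between_shift: "(\<forall>j. k < j \<and> j < m \<longrightarrow> R (n + j)) \<longleftrightarrow> (\<forall>j. n + k < j \<and> j < n + m \<longrightarrow> R (j::nat))"
proof
  assume R: "\<forall>j. k < j \<and> j < m \<longrightarrow> R (n + j)"
  show "\<forall>j. n + k < j \<and> j < n + m \<longrightarrow> R j"
  proof (intro allI impI)
    fix j
    assume "n + k < j \<and> j < n + m"
    then have "k < j - n \<and> j - n < m" and "n + (j - n) = j"
      by linarith+
    with R show "R j"
      by metis
  qed
qed auto

lemma Least_next_eq:
  fixes R :: "nat \<Rightarrow> bool"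
  assumes "f < r" and "R r"
  shows "(LEAST k. R k \<and> f < k \<and> (\<forall>j. f < j \<and> j < k \<longrightarrow> \<not> R j)) = (LEAST k. f < k \<and> R k)"
proof (rule Least_equality)
  have "f < (LEAST k. f < k \<and> R k) \<and> R (LEAST k. f < k \<and> R k)"
    using assms by (intro LeastI[of "\<lambda>k. f < k \<and> R k" r]) simp
  moreover have "\<not> R j" if "f < j" "j < (LEAST k. f < k \<and> R k)" for j
    using not_less_Least[OF that(2)] that(1) by simp
  ultimately show "R (LEAST k. f < k \<and> R k) \<and> f < (LEAST k. f < k \<and> R k) \<and>
      (\<forall>j. f < j \<and> j < (LEAST k. f < k \<and> R k) \<longrightarrow> \<not> R j)"
    by blast
  fix y
  assume "R y \<and> f < y \<and> (\<forall>j. f < j \<and> j < y \<longrightarrow> \<not> R j)"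
  then show "(LEAST k. f < k \<and> R k) \<le> y"
    by (intro Least_le) simp
qed

section \<open>Sequences of i.i.d. random letters\<close>

abbreviation iid_stream :: "'a pmf \<Rightarrow> 'a stream measure" where
  "iid_stream P \<equiv> stream_space (measure_pmf P)"

interpretation iid_stream: prob_space "iid_stream P" for P
  by (rule prob_space.prob_space_stream_space) (rule prob_space_measure_pmf)

lemma space_iid_stream [simp]: "space (iid_stream P) = UNIV"
  by (simp add: space_stream_space)

lemma emeasure_iid_stream_UNIV [simp]: "emeasure (iid_stream P) UNIV = 1"
  using iid_stream.emeasure_space_1 by simp

lemma sets_iid_stream_Collect [measurable (raw)]:
  "Measurable.pred (iid_stream P) R \<Longrightarrow> Collect R \<in> sets (iid_stream P)"
  unfolding pred_def by simp

lemma nn_integral_iid_stream_stake_sdrop: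
  fixes P :: "'a::countable pmf" and G :: "'a list \<Rightarrow> ennreal"
  assumes [measurable]: "F \<in> borel_measurable (iid_stream P)"
  shows "(\<integral>\<^sup>+\<omega>. G (stake n \<omega>) * F (sdrop n \<omega>) \<partial>iid_stream P)
       = (\<integral>\<^sup>+\<omega>. G (stake n \<omega>) \<partial>iid_stream P) * (\<integral>\<^sup>+\<omega>. F \<omega> \<partial>iid_stream P)"
proof (induction n arbitrary: G)
  case 0
  show ?case by (simp add: nn_integral_cmult)
next
  case (Suc n)
  note nn_integral_Cons = prob_space.nn_integral_stream_space[OF prob_space_measure_pmf]
  have "(\<integral>\<^sup>+\<omega>. G (stake (Suc n) \<omega>) * F (sdrop (Suc n) \<omega>) \<partial>iid_stream P)
      = (\<integral>\<^sup>+x. (\<integral>\<^sup>+\<omega>. G (x # stake n \<omega>) * F (sdrop n \<omega>) \<partial>iid_stream P) \<partial>P)"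
    by (subst nn_integral_Cons) auto
  also have "\<dots> = (\<integral>\<^sup>+x. (\<integral>\<^sup>+\<omega>. G (x # stake n \<omega>) \<partial>iid_stream P) \<partial>P) * (\<integral>\<^sup>+\<omega>. F \<omega> \<partial>iid_stream P)"
    using Suc.IH[of "\<lambda>xs. G (_ # xs)"] by (simp add: nn_integral_multc)
  also have "(\<integral>\<^sup>+x. (\<integral>\<^sup>+\<omega>. G (x # stake n \<omega>) \<partial>iid_stream P) \<partial>P) = (\<integral>\<^sup>+\<omega>. G (stake (Suc n) \<omega>) \<partial>iid_stream P)"
    by (subst nn_integral_Cons) auto
  finally show ?case .
qed

text \<open>A random time \<open>\<tau>\<close> is a stopping time iff it is \<open>prefix_determined\<close> everywhere; almost
  everywhere suffices for the strong Markov property below.\<close>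

definition prefix_determined :: "('a stream \<Rightarrow> nat) \<Rightarrow> 'a stream \<Rightarrow> bool" where
  "prefix_determined \<tau> \<omega> \<longleftrightarrow> (\<forall>\<omega>'. stake (\<tau> \<omega>) \<omega>' = stake (\<tau> \<omega>) \<omega> \<longrightarrow> \<tau> \<omega>' = \<tau> \<omega>)"

lemma nn_integral_iid_stream_sdrop_decompose:
  fixes P :: "'a::countable pmf" and \<tau> :: "'a stream \<Rightarrow> nat"
  assumes [measurable]: "F \<in> borel_measurable (iid_stream P)"
    and Q: "AE \<omega> in iid_stream P. \<forall>n. \<tau> \<omega> = n \<longleftrightarrow> stake n \<omega> \<in> Q n"
  shows "(\<integral>\<^sup>+\<omega>. F (sdrop (\<tau> \<omega>) \<omega>) \<partial>iid_stream P)
    = (\<Sum>n. \<integral>\<^sup>+\<omega>. indicator (Q n) (stake n \<omega>) \<partial>iid_stream P) * (\<integral>\<^sup>+\<omega>. F \<omega> \<partial>iid_stream P)"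
proof -
  have "(\<integral>\<^sup>+\<omega>. F (sdrop (\<tau> \<omega>) \<omega>) \<partial>iid_stream P)
      = (\<integral>\<^sup>+\<omega>. (\<Sum>n. indicator (Q n) (stake n \<omega>) * F (sdrop n \<omega>)) \<partial>iid_stream P)"
  proof (rule nn_integral_cong_AE)
    show "AE \<omega> in iid_stream P. F (sdrop (\<tau> \<omega>) \<omega>) = (\<Sum>n. indicator (Q n) (stake n \<omega>) * F (sdrop n \<omega>))"
      using Q
    proof eventually_elim
      case (elim \<omega>)
      then have "(\<Sum>n. indicator (Q n) (stake n \<omega>) * F (sdrop n \<omega>))
          = (\<Sum>n\<in>{\<tau> \<omega>}. indicator (Q n) (stake n \<omega>) * F (sdrop n \<omega>))"
        by (intro suminf_finite) (auto simp: indicator_def elim[rule_format, symmetric])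
      moreover have "stake (\<tau> \<omega>) \<omega> \<in> Q (\<tau> \<omega>)"
        using elim by blast
      ultimately show ?case
        by simp
    qed
  qed
  also have "\<dots> = (\<Sum>n. (\<integral>\<^sup>+\<omega>. indicator (Q n) (stake n \<omega>) \<partial>iid_stream P) * (\<integral>\<^sup>+\<omega>. F \<omega> \<partial>iid_stream P))"
    by (simp add: nn_integral_suminf nn_integral_iid_stream_stake_sdrop)
  finally show ?thesis
    by simp
qed

lemma nn_integral_iid_stream_sdrop_stopping_time:
  fixes P :: "'a::countable pmf" and \<tau> :: "'a stream \<Rightarrow> nat"
  assumes [measurable]: "F \<in> borel_measurable (iid_stream P)"
    and stopping: "AE \<omega> in iid_stream P. prefix_determined \<tau> \<omega>"
  shows "(\<integral>\<^sup>+\<omega>. F (sdrop (\<tau> \<omega>) \<omega>) \<partial>iid_stream P) = (\<integral>\<^sup>+\<omega>. F \<omega> \<partial>iid_stream P)"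
proof -
  define Q where "Q n = stake n ` {\<omega>. \<tau> \<omega> = n \<and> prefix_determined \<tau> \<omega>}" for n
  have Q: "AE \<omega> in iid_stream P. \<forall>n. \<tau> \<omega> = n \<longleftrightarrow> stake n \<omega> \<in> Q n"
    using stopping
  proof eventually_elim
    case (elim \<omega>)
    show ?case
    proof (intro allI iffI)
      show "stake n \<omega> \<in> Q n" if "\<tau> \<omega> = n" for n
        using elim that unfolding Q_def by blast
      show "\<tau> \<omega> = n" if "stake n \<omega> \<in> Q n" for n
        using that unfolding Q_def prefix_determined_def by blast
    qed
  qed
  from nn_integral_iid_stream_sdrop_decompose[of "\<lambda>_. 1", OF _ Q]
  have "(\<Sum>n. \<integral>\<^sup>+\<omega>. indicator (Q n) (stake n \<omega>) \<partial>iid_stream P) = 1"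
    by simp
  with nn_integral_iid_stream_sdrop_decompose[OF _ Q] show ?thesis
    by simp
qed

lemma nn_integral_iid_stream_add_sdrop_stopping_time:
  fixes P :: "'a::countable pmf" and \<tau> :: "'a stream \<Rightarrow> nat"
  assumes [measurable]: "G \<in> borel_measurable (iid_stream P)" "F \<in> borel_measurable (iid_stream P)"
    "\<tau> \<in> measurable (iid_stream P) (count_space UNIV)"
    and "AE \<omega> in iid_stream P. prefix_determined \<tau> \<omega>"
  shows "(\<integral>\<^sup>+\<omega>. G \<omega> + F (sdrop (\<tau> \<omega>) \<omega>) \<partial>iid_stream P)
    = (\<integral>\<^sup>+\<omega>. G \<omega> \<partial>iid_stream P) + (\<integral>\<^sup>+\<omega>. F \<omega> \<partial>iid_stream P)"
  using assms by (simp add: nn_integral_add nn_integral_iid_stream_sdrop_stopping_time)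

lemma emeasure_iid_stream_never_before:
  fixes P :: "'a::countable pmf"
  shows "emeasure (iid_stream P) {\<omega>. \<forall>k<n. \<not> E (\<omega> !! k)} = ennreal ((1 - measure_pmf.prob P {x. E x}) ^ n)"
proof (induction n)
  case (Suc n)
  have "{\<omega>. \<forall>k<Suc n. \<not> E ((x ## \<omega>) !! k)} = (if E x then {} else {\<omega>. \<forall>k<n. \<not> E (\<omega> !! k)})" for x
    by (auto simp: less_Suc_eq_0_disj)
  then have "emeasure (iid_stream P) {\<omega>. \<forall>k<Suc n. \<not> E (\<omega> !! k)}
      = (\<integral>\<^sup>+x. indicator {x. \<not> E x} x * ennreal ((1 - measure_pmf.prob P {x. E x}) ^ n) \<partial>P)"
    by (subst prob_space.emeasure_stream_space[OF prob_space_measure_pmf])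
       (auto simp: Suc indicator_def intro!: nn_integral_cong)
  also have "\<dots> = emeasure P {x. \<not> E x} * ennreal ((1 - measure_pmf.prob P {x. E x}) ^ n)"
    by (simp add: nn_integral_multc)
  also have "emeasure P {x. \<not> E x} = ennreal (1 - measure_pmf.prob P {x. E x})"
    using measure_pmf.prob_compl[of "{x. E x}" P]
    by (simp add: measure_pmf.emeasure_eq_measure Compl_eq_Diff_UNIV[symmetric] Collect_neg_eq)
  finally show ?case
    by (simp add: ennreal_mult[symmetric])
qed simp

lemma AE_iid_stream_ex:
  fixes P :: "'a::countable pmf"
  assumes "0 < measure_pmf.prob P {x. E x}"
  shows "AE \<omega> in iid_stream P. \<exists>k. E (\<omega> !! k)"
proof -
  let ?q = "1 - measure_pmf.prob P {x. E x}"
  have q: "0 \<le> ?q"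
    using measure_pmf.prob_le_1[of P "{x. E x}"] by simp
  have "measure (iid_stream P) {\<omega>. \<forall>k. \<not> E (\<omega> !! k)} \<le> ?q ^ n" for n
  proof -
    have "emeasure (iid_stream P) {\<omega>. \<forall>k. \<not> E (\<omega> !! k)} \<le> emeasure (iid_stream P) {\<omega>. \<forall>k<n. \<not> E (\<omega> !! k)}"
      by (intro emeasure_mono) auto
    also have "\<dots> = ennreal (?q ^ n)"
      by (rule emeasure_iid_stream_never_before)
    finally show ?thesis
      using q by (simp add: iid_stream.emeasure_eq_measure)
  qed
  moreover have "(\<lambda>n. ?q ^ n) \<longlonglongrightarrow> 0"
    using assms q by (intro LIMSEQ_power_zero) auto
  ultimately have "measure (iid_stream P) {\<omega>. \<forall>k. \<not> E (\<omega> !! k)} \<le> 0"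
    by (intro LIMSEQ_le_const[of "\<lambda>n. ?q ^ n"]) auto
  then have "measure (iid_stream P) {\<omega>. \<forall>k. \<not> E (\<omega> !! k)} = 0"
    by (simp add: antisym)
  then show ?thesis
    by (subst AE_iff_measurable[OF _ refl]) (auto simp: iid_stream.emeasure_eq_measure)
qed

lemma AE_iid_stream_ex_ge:
  fixes P :: "'a::countable pmf"
  assumes "0 < measure_pmf.prob P {x. E x}"
  shows "AE \<omega> in iid_stream P. \<exists>k\<ge>n. E (\<omega> !! k)"
proof (induction n)
  case 0
  show ?case using AE_iid_stream_ex[OF assms] by simp
next
  case (Suc n)
  have "AE \<omega> in iid_stream P. \<exists>k\<ge>Suc n. E ((x ## \<omega>) !! k)" for x
    using Suc by eventually_elim (auto intro: exI[of _ "Suc _"])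
  then show ?case
    by (subst prob_space.AE_stream_space[OF prob_space_measure_pmf]) auto
qed

lemma nn_integral_iid_stream_Least:
  fixes P :: "'a::countable pmf"
  assumes p: "0 < measure_pmf.prob P {x. E x}"
  shows "(\<integral>\<^sup>+\<omega>. of_nat (Suc (LEAST k. E (\<omega> !! k))) \<partial>iid_stream P) = ennreal (1 / measure_pmf.prob P {x. E x})"
proof -
  let ?q = "1 - measure_pmf.prob P {x. E x}"
  have tail: "emeasure (iid_stream P) {\<omega>. t < Suc (LEAST k. E (\<omega> !! k))} = ennreal (?q ^ t)" for t
  proof -
    have "AE \<omega> in iid_stream P. t < Suc (LEAST k. E (\<omega> !! k)) \<longleftrightarrow> (\<forall>k<t. \<not> E (\<omega> !! k))"
      using AE_iid_stream_ex[OF p]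
      by eventually_elim (metis LeastI_ex not_less_Least less_Suc_eq_le le_less_trans not_le)
    then show ?thesis
      unfolding emeasure_iid_stream_never_before[symmetric]
      by (intro emeasure_eq_AE) auto
  qed
  have "(\<lambda>t. ?q ^ t) sums (1 / measure_pmf.prob P {x. E x})"
    using p geometric_sums[of ?q] measure_pmf.prob_le_1[of P "{x. E x}"] by simp
  then have "(\<lambda>t. ennreal (?q ^ t)) sums ennreal (1 / measure_pmf.prob P {x. E x})"
    using p by (subst sums_ennreal) auto
  then show ?thesis
    by (subst nn_integral_nat_function) (auto simp: tail sums_iff)
qed

section \<open>Refresh moments and cycles of a slot sequence\<close>

fun sole_tx :: "user \<Rightarrow> bool \<times> bool \<Rightarrow> bool" where
  "sole_tx UA x \<longleftrightarrow> fst x \<and> \<not> snd x"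
| "sole_tx UB x \<longleftrightarrow> snd x \<and> \<not> fst x"

fun other :: "user \<Rightarrow> user" where
  "other UA = UB"
| "other UB = UA"

lemma user_neq_iff_other: "v \<noteq> u \<longleftrightarrow> v = other u"
  by (cases u; cases v) auto

lemma sole_tx_other: "sole_tx u x \<Longrightarrow> \<not> sole_tx (other u) x"
  by (cases u) auto

lemma succ_iff_sole_tx: "succ \<omega> u k \<longleftrightarrow> sole_tx u (\<omega> !! k)"
  by (cases u) (auto simp: succ_def tx_def user_neq_iff_other)

lemma refresh_iff:
  "refresh \<omega> u k \<longleftrightarrow> sole_tx u (\<omega> !! k) \<and>
     (\<exists>m>k. sole_tx (other u) (\<omega> !! m) \<and>
        (\<forall>j. k < j \<and> j < m \<longrightarrow> \<not> sole_tx u (\<omega> !! j) \<and> \<not> sole_tx (other u) (\<omega> !! j)))"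
proof -
  have "(\<exists>v. succ \<omega> v j) \<longleftrightarrow> sole_tx u (\<omega> !! j) \<or> sole_tx (other u) (\<omega> !! j)" for j
    by (metis succ_iff_sole_tx user_neq_iff_other)
  moreover have "sole_tx (other u) (\<omega> !! m) \<longrightarrow> \<not> sole_tx u (\<omega> !! m)" for m
    by (cases u) auto
  ultimately show ?thesis
    unfolding refresh_def succ_iff_sole_tx by blast
qed

lemma M_eq_0_iff: "M \<omega> v k0 k1 = 0 \<longleftrightarrow> (\<forall>j. k0 < j \<and> j \<le> k1 \<longrightarrow> \<not> sole_tx v (\<omega> !! j))"
proof -
  have "finite {j. k0 < j \<and> j \<le> k1 \<and> succ \<omega> v j}"
    by (rule finite_subset[of _ "{..k1}"]) auto
  then show ?thesis
    by (auto simp: M_def succ_iff_sole_tx)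
qed

lemma M_pos_after_refresh:
  assumes "refresh \<omega> u k0" and "sole_tx u (\<omega> !! k1)" and "k0 < k1"
  shows "0 < M \<omega> v k0 k1"
proof (cases "v = u")
  case True
  with assms(2,3) show ?thesis
    by (intro gr0I) (auto simp: M_eq_0_iff)
next
  case False
  then have v: "v = other u"
    by (simp add: user_neq_iff_other)
  from assms(1) obtain m where m: "k0 < m" "sole_tx (other u) (\<omega> !! m)"
      "\<forall>j. k0 < j \<and> j < m \<longrightarrow> \<not> sole_tx u (\<omega> !! j)"
    by (auto simp: refresh_iff)
  have "m \<le> k1"
    using m(3) assms(2,3) by (meson not_le)
  with m v show ?thesis
    by (intro gr0I) (auto simp: M_eq_0_iff)
qed

lemma is_cycle_iff:
  assumes "refresh \<omega> u k0"
  shows "is_cycle \<omega> u k0 k1 \<longleftrightarrow>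
    refresh \<omega> u k1 \<and> k0 < k1 \<and> (\<forall>k. k0 < k \<and> k < k1 \<longrightarrow> \<not> refresh \<omega> u k)"
proof
  assume "is_cycle \<omega> u k0 k1"
  moreover have "0 < M \<omega> v k0 k" if "k0 < k" "refresh \<omega> u k" for v k
    using M_pos_after_refresh[OF assms] that by (simp add: refresh_iff)
  ultimately show "refresh \<omega> u k1 \<and> k0 < k1 \<and> (\<forall>k. k0 < k \<and> k < k1 \<longrightarrow> \<not> refresh \<omega> u k)"
    unfolding is_cycle_def by (metis less_irrefl)
next
  assume next_refresh: "refresh \<omega> u k1 \<and> k0 < k1 \<and> (\<forall>k. k0 < k \<and> k < k1 \<longrightarrow> \<not> refresh \<omega> u k)"
  then have "sole_tx u (\<omega> !! k1)"
    by (simp add: refresh_iff)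
  then have "\<forall>v. 0 < M \<omega> v k0 k1"
    using M_pos_after_refresh[OF assms] next_refresh by simp
  with assms next_refresh show "is_cycle \<omega> u k0 k1"
    unfolding is_cycle_def by simp
qed

lemma refresh_sdrop: "refresh (sdrop n \<omega>) u k \<longleftrightarrow> refresh \<omega> u (n + k)"
proof -
  have "(\<exists>m>k. Q (n + m) \<and> (\<forall>j. k < j \<and> j < m \<longrightarrow> R (n + j))) \<longleftrightarrow>
      (\<exists>m>n + k. Q m \<and> (\<forall>j. n + k < j \<and> j < m \<longrightarrow> R j))" for Q R :: "nat \<Rightarrow> bool"
    unfolding all_between_shift by (rule ex_gt_shift)
  from this[of "\<lambda>m. sole_tx (other u) (\<omega> !! m)" "\<lambda>j. \<not> sole_tx u (\<omega> !! j) \<and> \<not> sole_tx (other u) (\<omega> !! j)"]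
  show ?thesis
    unfolding refresh_iff sdrop_snth by simp
qed

definition successes_recur :: "(bool \<times> bool) stream \<Rightarrow> bool" where
  "successes_recur \<omega> \<longleftrightarrow> (\<forall>v n. \<exists>k\<ge>n. sole_tx v (\<omega> !! k))"

definition first_success :: "(bool \<times> bool) stream \<Rightarrow> user \<Rightarrow> nat" where
  "first_success \<omega> u = (LEAST k. sole_tx u (\<omega> !! k))"

definition handover :: "(bool \<times> bool) stream \<Rightarrow> user \<Rightarrow> nat" where
  "handover \<omega> u = (LEAST k. first_success \<omega> u < k \<and> sole_tx (other u) (\<omega> !! k))"

definition cycle_end :: "(bool \<times> bool) stream \<Rightarrow> user \<Rightarrow> nat" where
  "cycle_end \<omega> u = (LEAST k. is_cycle \<omega> u (first_refresh \<omega> u) k)"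

lemma sole_tx_first_success:
  assumes "successes_recur \<omega>"
  shows "sole_tx u (\<omega> !! first_success \<omega> u)"
proof -
  obtain k where "sole_tx u (\<omega> !! k)"
    using assms unfolding successes_recur_def by blast
  then show ?thesis
    unfolding first_success_def by (rule LeastI)
qed

lemma
  assumes "successes_recur \<omega>"
  shows first_success_less_handover: "first_success \<omega> u < handover \<omega> u"
    and sole_tx_other_handover: "sole_tx (other u) (\<omega> !! handover \<omega> u)"
proof -
  obtain k where "Suc (first_success \<omega> u) \<le> k" "sole_tx (other u) (\<omega> !! k)"
    using assms unfolding successes_recur_def by (elim allE exE conjE)
  then have "first_success \<omega> u < k \<and> sole_tx (other u) (\<omega> !! k)"
    by simp
  then have "first_success \<omega> u < handover \<omega> u \<and> sole_tx (other u) (\<omega> !! handover \<omega> u)"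
    unfolding handover_def by (rule LeastI)
  then show "first_success \<omega> u < handover \<omega> u" and "sole_tx (other u) (\<omega> !! handover \<omega> u)"
    by auto
qed

lemma not_sole_tx_before_handover:
  assumes "first_success \<omega> u < j" and "j < handover \<omega> u"
  shows "\<not> sole_tx (other u) (\<omega> !! j)"
proof -
  have "\<not> (first_success \<omega> u < j \<and> sole_tx (other u) (\<omega> !! j))"
    using assms(2) unfolding handover_def by (rule not_less_Least)
  with assms(1) show ?thesis
    by simp
qed

lemma refresh_before_other_success:
  assumes "sole_tx u (\<omega> !! a)" and "a < b" and "sole_tx (other u) (\<omega> !! b)"
    and "\<And>j. a < j \<Longrightarrow> j < b \<Longrightarrow> \<not> sole_tx (other u) (\<omega> !! j)"
  shows "\<exists>r. a \<le> r \<and> r < b \<and> refresh \<omega> u r"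
proof -
  let ?S = "{k. k < b \<and> sole_tx u (\<omega> !! k)}"
  define r where "r = Max ?S"
  have S: "finite ?S" "a \<in> ?S"
    using assms(1,2) by auto
  have "r \<in> ?S"
    using S unfolding r_def by (intro Max_in) auto
  then have "r < b \<and> sole_tx u (\<omega> !! r)"
    by simp
  moreover have "a \<le> r"
    using S unfolding r_def by (intro Max_ge)
  moreover have "\<not> sole_tx u (\<omega> !! j)" if "r < j" "j < b" for j
  proof
    assume "sole_tx u (\<omega> !! j)"
    with that S(1) have "j \<le> r"
      unfolding r_def by (intro Max_ge) auto
    with that show False
      by simp
  qed
  ultimately have "refresh \<omega> u r"
    using assms(3,4) unfolding refresh_iff by (auto intro!: exI[of _ b])
  with \<open>a \<le> r\<close> \<open>r < b \<and> _\<close> show ?thesis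
    by blast
qed

lemma ex_refresh_ge:
  assumes "successes_recur \<omega>"
  shows "\<exists>r\<ge>n. refresh \<omega> u r"
proof -
  obtain a where a: "n \<le> a" "sole_tx u (\<omega> !! a)"
    using assms unfolding successes_recur_def by blast
  obtain c where c: "Suc a \<le> c" "sole_tx (other u) (\<omega> !! c)"
    using assms unfolding successes_recur_def by blast
  define b where "b = (LEAST k. a < k \<and> sole_tx (other u) (\<omega> !! k))"
  have "a < b" "sole_tx (other u) (\<omega> !! b)"
    using LeastI[of "\<lambda>k. a < k \<and> sole_tx (other u) (\<omega> !! k)" c] c unfolding b_def by auto
  moreover have "\<not> sole_tx (other u) (\<omega> !! j)" if "a < j" "j < b" for j
    using that not_less_Least unfolding b_def by blast
  ultimately obtain r where "a \<le> r" "refresh \<omega> u r"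
    using refresh_before_other_success[OF a(2)] by blast
  with a(1) show ?thesis
    by (auto intro: order_trans)
qed

lemma refresh_first_refresh:
  assumes "successes_recur \<omega>"
  shows "refresh \<omega> u (first_refresh \<omega> u)"
proof -
  obtain r where "refresh \<omega> u r"
    using ex_refresh_ge[OF assms] by blast
  then show ?thesis
    unfolding first_refresh_def by (rule LeastI)
qed

lemma first_refresh_less_handover:
  assumes "successes_recur \<omega>"
  shows "first_refresh \<omega> u < handover \<omega> u"
proof -
  obtain r where "r < handover \<omega> u" "refresh \<omega> u r"
    using refresh_before_other_success[OF sole_tx_first_success[OF assms]
        first_success_less_handover[OF assms] sole_tx_other_handover[OF assms]
        not_sole_tx_before_handover] by blast
  then show ?thesis
    unfolding first_refresh_def using Least_le[of "refresh \<omega> u" r] by simp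
qed

lemma not_refresh_until_handover:
  assumes "successes_recur \<omega>" and "first_refresh \<omega> u < k" and "k \<le> handover \<omega> u"
  shows "\<not> refresh \<omega> u k"
proof
  assume "refresh \<omega> u k"
  then have k: "sole_tx u (\<omega> !! k)"
    by (simp add: refresh_iff)
  obtain m where m: "first_refresh \<omega> u < m" "sole_tx (other u) (\<omega> !! m)"
      "\<forall>j. first_refresh \<omega> u < j \<and> j < m \<longrightarrow> \<not> sole_tx u (\<omega> !! j)"
    using refresh_first_refresh[OF assms(1), of u] by (auto simp: refresh_iff)
  have "m \<noteq> k"
    using m(2) sole_tx_other[OF k] by auto
  moreover have "\<not> k < m"
    using m(3) k assms(2) by auto
  ultimately have "m < handover \<omega> u"
    using assms(3) by simp
  moreover have "first_success \<omega> u \<le> first_refresh \<omega> u"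
    using refresh_first_refresh[OF assms(1), of u] unfolding first_success_def
    by (intro Least_le) (simp add: refresh_iff)
  ultimately show False
    using not_sole_tx_before_handover[of \<omega> u m] m(1,2) by simp
qed

lemma cycle_end_eq:
  assumes "successes_recur \<omega>"
  shows "cycle_end \<omega> u = Suc (handover \<omega> u) + first_refresh (sdrop (Suc (handover \<omega> u)) \<omega>) u"
proof -
  obtain r where r: "Suc (handover \<omega> u) \<le> r" "refresh \<omega> u r"
    using ex_refresh_ge[OF assms] by blast
  have "first_refresh \<omega> u < r"
    using first_refresh_less_handover[OF assms, of u] r(1) by simp
  from this r(2) have "cycle_end \<omega> u = (LEAST k. first_refresh \<omega> u < k \<and> refresh \<omega> u k)"
    unfolding cycle_end_def is_cycle_iff[OF refresh_first_refresh[OF assms]] conj_assoc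
    by (rule Least_next_eq)
  also have "\<dots> = Suc (handover \<omega> u) + (LEAST k. refresh \<omega> u (Suc (handover \<omega> u) + k))"
    using first_refresh_less_handover[OF assms, of u] not_refresh_until_handover[OF assms] r
    by (intro Least_gt_eq_add_Least) auto
  finally show ?thesis
    unfolding first_refresh_def refresh_sdrop .
qed

lemma Suc_handover_eq:
  assumes "successes_recur \<omega>"
  shows "Suc (handover \<omega> u) =
    Suc (first_success \<omega> u) + Suc (first_success (sdrop (Suc (first_success \<omega> u)) \<omega>) (other u))"
proof -
  have "handover \<omega> u = Suc (first_success \<omega> u) + (LEAST k. sole_tx (other u) (\<omega> !! (Suc (first_success \<omega> u) + k)))"
    unfolding handover_def using first_success_less_handover[OF assms, of u] sole_tx_other_handover[OF assms, of u]
    by (intro Least_gt_eq_add_Least) auto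
  then show ?thesis
    unfolding first_success_def[of "sdrop _ _"] sdrop_snth by simp
qed

lemma stake_eq_iff_snth_eq: "stake n \<omega>' = stake n \<omega> \<longleftrightarrow> (\<forall>k<n. \<omega>' !! k = \<omega> !! k)"
  by (simp add: list_eq_iff_nth_eq del: stake.simps)

lemma first_success_stake:
  assumes "successes_recur \<omega>" and "stake (Suc (first_success \<omega> u)) \<omega>' = stake (Suc (first_success \<omega> u)) \<omega>"
  shows "first_success \<omega>' u = first_success \<omega> u"
  unfolding first_success_def[of \<omega>']
proof (rule Least_equality)
  show "sole_tx u (\<omega>' !! first_success \<omega> u)"
    using assms(2)[unfolded stake_eq_iff_snth_eq, rule_format] sole_tx_first_success[OF assms(1)] by simp
  show "first_success \<omega> u \<le> k" if "sole_tx u (\<omega>' !! k)" for k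
  proof (rule ccontr)
    assume "\<not> first_success \<omega> u \<le> k"
    with that assms(2)[unfolded stake_eq_iff_snth_eq, rule_format, of k] have "sole_tx u (\<omega> !! k)" "k < first_success \<omega> u"
      by simp_all
    then show False
      using not_less_Least[of k "\<lambda>k. sole_tx u (\<omega> !! k)"] unfolding first_success_def by simp
  qed
qed

lemma handover_stake:
  assumes "successes_recur \<omega>" and "stake (Suc (handover \<omega> u)) \<omega>' = stake (Suc (handover \<omega> u)) \<omega>"
  shows "handover \<omega>' u = handover \<omega> u"
proof -
  have agree: "\<omega>' !! k = \<omega> !! k" if "k \<le> handover \<omega> u" for k
    using assms(2)[unfolded stake_eq_iff_snth_eq, rule_format] that by simp
  have "stake (Suc (first_success \<omega> u)) \<omega>' = stake (Suc (first_success \<omega> u)) \<omega>"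
    unfolding stake_eq_iff_snth_eq using first_success_less_handover[OF assms(1), of u] agree by simp
  then have first: "first_success \<omega>' u = first_success \<omega> u"
    by (rule first_success_stake[OF assms(1)])
  show ?thesis
    unfolding handover_def[of \<omega>'] first
  proof (rule Least_equality)
    show "first_success \<omega> u < handover \<omega> u \<and> sole_tx (other u) (\<omega>' !! handover \<omega> u)"
      using first_success_less_handover[OF assms(1), of u] sole_tx_other_handover[OF assms(1), of u] agree
      by simp
    show "handover \<omega> u \<le> k" if k: "first_success \<omega> u < k \<and> sole_tx (other u) (\<omega>' !! k)" for k
    proof (rule ccontr)
      assume "\<not> handover \<omega> u \<le> k"
      with k agree[of k] not_sole_tx_before_handover[of \<omega> u k] show False
        by simp
    qed
  qed
qed

lemma prefix_determined_Suc_first_success: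
  "successes_recur \<omega> \<Longrightarrow> prefix_determined (\<lambda>\<omega>. Suc (first_success \<omega> u)) \<omega>"
  unfolding prefix_determined_def by (metis first_success_stake)

lemma prefix_determined_Suc_handover:
  "successes_recur \<omega> \<Longrightarrow> prefix_determined (\<lambda>\<omega>. Suc (handover \<omega> u)) \<omega>"
  unfolding prefix_determined_def by (metis handover_stake)

section \<open>Expected cycle time of slotted Aloha\<close>

fun success_prob :: "real \<Rightarrow> real \<Rightarrow> user \<Rightarrow> real" where
  "success_prob pA pB UA = pA * (1 - pB)"
| "success_prob pA pB UB = pB * (1 - pA)"

lemma prob_sole_tx:
  assumes "0 \<le> pA" "pA \<le> 1" "0 \<le> pB" "pB \<le> 1"
  shows "measure_pmf.prob (slot_pmf pA pB) {x. sole_tx u x} = success_prob pA pB u"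
proof -
  have "{x. sole_tx UA x} = {(True, False)}" "{x. sole_tx UB x} = {(False, True)}"
    by auto
  with assms show ?thesis
    by (cases u) (simp_all add: measure_pmf_single slot_pmf_def pmf_pair)
qed

lemma success_prob_pos: "0 < pA \<Longrightarrow> pA < 1 \<Longrightarrow> 0 < pB \<Longrightarrow> pB < 1 \<Longrightarrow> 0 < success_prob pA pB u"
  by (cases u) simp_all

lemma measurable_first_success [measurable]:
  "(\<lambda>\<omega>. first_success \<omega> u) \<in> measurable (iid_stream P) (count_space UNIV)"
  unfolding first_success_def by measurable

lemma measurable_handover [measurable]:
  "(\<lambda>\<omega>. handover \<omega> u) \<in> measurable (iid_stream P) (count_space UNIV)"
  unfolding handover_def by measurable

lemma measurable_first_refresh [measurable]:
  "(\<lambda>\<omega>. first_refresh \<omega> u) \<in> measurable (iid_stream P) (count_space UNIV)"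
  unfolding first_refresh_def refresh_iff by measurable

instance user :: countable
  by countable_datatype

lemma measurable_is_cycle [measurable]: "Measurable.pred (iid_stream P) (\<lambda>\<omega>. is_cycle \<omega> u k0 k1)"
  unfolding is_cycle_def refresh_iff zero_less_iff_neq_zero M_eq_0_iff by measurable

lemma measurable_cycle_end [measurable]:
  "(\<lambda>\<omega>. cycle_end \<omega> u) \<in> measurable (iid_stream P) (count_space UNIV)"
  unfolding cycle_end_def by measurable

lemma AE_successes_recur:
  assumes "0 < pA" "pA < 1" "0 < pB" "pB < 1"
  shows "AE \<omega> in iid_stream (slot_pmf pA pB). successes_recur \<omega>"
  unfolding successes_recur_def
  using assms AE_iid_stream_ex_ge[of "slot_pmf pA pB" "sole_tx _"] prob_sole_tx success_prob_pos
  by (simp add: AE_all_countable)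

context
  fixes pA pB :: real
  assumes p: "0 < pA" "pA < 1" "0 < pB" "pB < 1"
begin

lemma nn_integral_Suc_first_success:
  "(\<integral>\<^sup>+\<omega>. of_nat (Suc (first_success \<omega> v)) \<partial>iid_stream (slot_pmf pA pB)) = ennreal (1 / success_prob pA pB v)"
  unfolding first_success_def
  using nn_integral_iid_stream_Least[of "slot_pmf pA pB" "sole_tx v"] prob_sole_tx[of pA pB v] success_prob_pos[OF p, of v] p
  by simp

lemma nn_integral_Suc_handover:
  "(\<integral>\<^sup>+\<omega>. of_nat (Suc (handover \<omega> u)) \<partial>iid_stream (slot_pmf pA pB))
    = ennreal (1 / success_prob pA pB u) + ennreal (1 / success_prob pA pB (other u))"
proof -
  let ?S = "iid_stream (slot_pmf pA pB)" and ?\<tau> = "\<lambda>\<omega>. Suc (first_success \<omega> u)"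
  have "(\<integral>\<^sup>+\<omega>. of_nat (Suc (handover \<omega> u)) \<partial>?S)
      = (\<integral>\<^sup>+\<omega>. of_nat (?\<tau> \<omega>) + of_nat (Suc (first_success (sdrop (?\<tau> \<omega>) \<omega>) (other u))) \<partial>?S)"
    using AE_successes_recur[OF p]
    by (intro nn_integral_cong_AE) (elim eventually_mono, simp only: Suc_handover_eq of_nat_add)
  also have "\<dots> = (\<integral>\<^sup>+\<omega>. of_nat (?\<tau> \<omega>) \<partial>?S) + (\<integral>\<^sup>+\<omega>. of_nat (Suc (first_success \<omega> (other u))) \<partial>?S)"
    using AE_successes_recur[OF p] prefix_determined_Suc_first_success
    by (intro nn_integral_iid_stream_add_sdrop_stopping_time) (auto elim!: eventually_mono)
  finally show ?thesis
    by (simp only: nn_integral_Suc_first_success)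
qed

lemma nn_integral_cycle_length:
  "(\<integral>\<^sup>+\<omega>. of_nat (cycle_end \<omega> u - first_refresh \<omega> u) \<partial>iid_stream (slot_pmf pA pB))
    = (\<integral>\<^sup>+\<omega>. of_nat (Suc (handover \<omega> u)) \<partial>iid_stream (slot_pmf pA pB))"
proof -
  let ?S = "iid_stream (slot_pmf pA pB)" and ?\<tau> = "\<lambda>\<omega>. Suc (handover \<omega> u)"
  have "(\<integral>\<^sup>+\<omega>. of_nat (cycle_end \<omega> u - first_refresh \<omega> u) \<partial>?S)
      = (\<integral>\<^sup>+\<omega>. of_nat (?\<tau> \<omega> - first_refresh \<omega> u) + of_nat (first_refresh (sdrop (?\<tau> \<omega>) \<omega>) u) \<partial>?S)"
  proof (rule nn_integral_cong_AE)
    show "AE \<omega> in ?S. of_nat (cycle_end \<omega> u - first_refresh \<omega> u)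
        = of_nat (?\<tau> \<omega> - first_refresh \<omega> u) + (of_nat (first_refresh (sdrop (?\<tau> \<omega>) \<omega>) u) :: ennreal)"
      using AE_successes_recur[OF p]
    proof eventually_elim
      case (elim \<omega>)
      have "cycle_end \<omega> u - first_refresh \<omega> u
          = (?\<tau> \<omega> - first_refresh \<omega> u) + first_refresh (sdrop (?\<tau> \<omega>) \<omega>) u"
        using cycle_end_eq[OF elim, of u] first_refresh_less_handover[OF elim, of u] by linarith
      then show ?case
        by (simp only: of_nat_add)
    qed
  qed
  also have "\<dots> = (\<integral>\<^sup>+\<omega>. of_nat (?\<tau> \<omega> - first_refresh \<omega> u) \<partial>?S) + (\<integral>\<^sup>+\<omega>. of_nat (first_refresh \<omega> u) \<partial>?S)"
    using AE_successes_recur[OF p] prefix_determined_Suc_handover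
    by (intro nn_integral_iid_stream_add_sdrop_stopping_time) (auto elim!: eventually_mono)
  also have "\<dots> = (\<integral>\<^sup>+\<omega>. of_nat (?\<tau> \<omega> - first_refresh \<omega> u) + of_nat (first_refresh \<omega> u) \<partial>?S)"
    by (intro nn_integral_add[symmetric]) measurable
  also have "\<dots> = (\<integral>\<^sup>+\<omega>. of_nat (?\<tau> \<omega>) \<partial>?S)"
    using AE_successes_recur[OF p]
    by (intro nn_integral_cong_AE)
       (elim eventually_mono, drule first_refresh_less_handover[where u = u], simp flip: of_nat_add)
  finally show ?thesis .
qed

lemma integral_cycle_time:
  "(\<integral>\<omega>. cycle_time T \<omega> u \<partial>aloha_space pA pB) = T * (1 / success_prob pA pB u + 1 / success_prob pA pB (other u))"
proof -
  let ?S = "iid_stream (slot_pmf pA pB)"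
  have pos: "0 < success_prob pA pB v" for v
    using success_prob_pos[OF p] .
  have "(\<integral>\<^sup>+\<omega>. ennreal (real (cycle_end \<omega> u - first_refresh \<omega> u)) \<partial>?S)
      = ennreal (1 / success_prob pA pB u) + ennreal (1 / success_prob pA pB (other u))"
    unfolding ennreal_of_nat_eq_real_of_nat[symmetric] nn_integral_cycle_length
    by (rule nn_integral_Suc_handover)
  then have "has_bochner_integral ?S (\<lambda>\<omega>. real (cycle_end \<omega> u - first_refresh \<omega> u))
      (1 / success_prob pA pB u + 1 / success_prob pA pB (other u))"
    using pos by (intro has_bochner_integral_nn_integral) (simp_all add: less_imp_le)
  then show ?thesis
    unfolding cycle_time_def aloha_space_def cycle_end_def[symmetric]
    by (simp add: has_bochner_integral_integral_eq)
qed

end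

theorem theorem1:
  fixes pA pB T :: real
  assumes "0 < pA" "pA < 1" "0 < pB" "pB < 1" "0 < T"
  shows "channel_cycle_time pA pB T =
    ((1 - pA) * pB + (1 - pB) * pA) / ((1 - pA) * (1 - pB) * pA * pB) * T"
proof -
  have users: "(UNIV :: user set) = {UA, UB}"
    using user.exhaust by auto
  have "channel_cycle_time pA pB T = T * (1 / (pA * (1 - pB)) + 1 / (pB * (1 - pA)))"
    unfolding channel_cycle_time_def users using integral_cycle_time[OF assms(1-4)] by simp
  also have "\<dots> = ((1 - pA) * pB + (1 - pB) * pA) / ((1 - pA) * (1 - pB) * pA * pB) * T"
    using assms by (simp add: field_simps)
  finally show ?thesis .
qed

end
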